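(* Let $\sigma=\mathrm{diag}(\lambda_1,\dots,\lambda_d)$ be a quantum state with $\lambda_1\ge\lambda_2\ge\dots\ge\lambda_d$ and $\lambda_1\ge 1/2$, and let $0<\epsilon<\frac{1}{2\sqrt2}$. Then there is an absolute constant $c>0$ such that any algorithm that $\epsilon$-certifies $\sigma$ must use at least $c/\epsilon^2$ copies of the unknown state.
   Context: Task ($\epsilon$-certification of $\sigma$): a density matrix $\sigma$ is given by explicit description; the algorithm receives $n$ copies of an unknown density matrix $\rho$, promised that either $\rho=\sigma$ or $\|\rho-\sigma\|_1\ge\epsilon$ (trace norm), and must decide which holds with probability at least $2/3$ using arbitrary measurements, possibly entangled across all copies. *)

theory Defs
  imports "Jordan_Normal_Form.Schur_Decomposition" "HOL-Computational_Algebra.Polynomial"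
begin

definition kron :: "complex mat \<Rightarrow> complex mat \<Rightarrow> complex mat" where
  "kron A B = mat (dim_row A * dim_row B) (dim_col A * dim_col B)
     (\<lambda>(i, j). A $$ (i div dim_row B, j div dim_col B) * B $$ (i mod dim_row B, j mod dim_col B))"

fun tensor_pow :: "nat \<Rightarrow> complex mat \<Rightarrow> complex mat" where
  "tensor_pow 0 A = 1\<^sub>m 1"
| "tensor_pow (Suc n) A = kron A (tensor_pow n A)"

definition mtrace :: "complex mat \<Rightarrow> complex" where
  "mtrace A = (\<Sum>i<dim_row A. A $$ (i, i))"

definition hermitian :: "complex mat \<Rightarrow> bool" where
  "hermitian A \<longleftrightarrow> A \<in> carrier_mat (dim_row A) (dim_row A) \<and> mat_adjoint A = A"

definition psd :: "complex mat \<Rightarrow> bool" where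
  "psd A \<longleftrightarrow> hermitian A \<and>
     (\<forall>v \<in> carrier_vec (dim_row A). 0 \<le> Re (conjugate v \<bullet> (A *\<^sub>v v)))"

definition density_matrix :: "nat \<Rightarrow> complex mat \<Rightarrow> bool" where
  "density_matrix d \<rho> \<longleftrightarrow> \<rho> \<in> carrier_mat d d \<and> psd \<rho> \<and> mtrace \<rho> = 1"

text \<open>Trace norm = sum of singular values, i.e. of the square roots of the
  eigenvalues (with multiplicity) of A^* A.\<close>
definition trace_norm :: "complex mat \<Rightarrow> real" where
  "trace_norm A = (\<Sum>z \<in># proots (char_poly (mat_adjoint A * A)). sqrt (Re z))"

text \<open>A two-outcome measurement (POVM {M, I - M}) on D-dimensional space; outcome M = "accept: rho = sigma".\<close>
definition two_outcome_povm :: "nat \<Rightarrow> complex mat \<Rightarrow> bool" where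
  "two_outcome_povm D M \<longleftrightarrow> M \<in> carrier_mat D D \<and> psd M \<and> psd (1\<^sub>m D - M)"

definition accept_prob :: "complex mat \<Rightarrow> nat \<Rightarrow> complex mat \<Rightarrow> real" where
  "accept_prob M n \<rho> = Re (mtrace (M * tensor_pow n \<rho>))"

definition certifies :: "nat \<Rightarrow> complex mat \<Rightarrow> real \<Rightarrow> nat \<Rightarrow> complex mat \<Rightarrow> bool" where
  "certifies d \<sigma> \<epsilon> n M \<longleftrightarrow> two_outcome_povm (d ^ n) M \<and>
     accept_prob M n \<sigma> \<ge> 2/3 \<and>
     (\<forall>\<rho>. density_matrix d \<rho> \<and> trace_norm (\<rho> - \<sigma>) \<ge> \<epsilon> \<longrightarrow> accept_prob M n \<rho> \<le> 1/3)"

definition diag_state :: "nat \<Rightarrow> (nat \<Rightarrow> real) \<Rightarrow> complex mat" where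
  "diag_state d l = mat d d (\<lambda>(i, j). if i = j then complex_of_real (l i) else 0)"

end

theory Submission
  imports Defs
begin

text \<open>Write \<sigma> = A A* with A = sqrt \<sigma> and pick a state \<rho> = B B* at trace distance at least \<epsilon>
  from \<sigma> whose factor B has Frobenius overlap t = \<langle>A, B\<rangle> \<ge> 1 - 4 \<epsilon>^2 with A. For 0 \<le> M \<le> 1
  the Cauchy-Schwarz type bound tr (M X X*) \<le> (1 + r) tr (M Y Y*) + (1 + 1/r) |X - Y|_F^2, applied
  to the n-fold tensor powers X of A and Y of B, shows that a test accepting n copies of \<sigma> with
  probability 2/3 and n copies of \<rho> with probability 1/3 needs |X - Y|_F^2 = 2 - 2 t^n \<ge> 1/18.
  Hence n (1 - t) \<ge> 1 - t^n \<ge> 1/36, i.e. n \<ge> 1/(144 \<epsilon>^2).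
  If the largest and smallest eigenvalues of \<sigma> differ by at least 1/4, \<rho> rotates the two
  corresponding eigenvectors by a small angle; otherwise \<lambda>_1 \<ge> 1/2 forces d = 2 and \<rho> moves
  weight \<epsilon>/2 from one eigenvalue to the other.\<close>

lemma mat_adjoint_eq_mat:
  "mat_adjoint A = mat (dim_col A) (dim_row A) (\<lambda>(i, j). conjugate (A $$ (j, i)))"
  unfolding mat_adjoint_def by (rule eq_matI) (auto simp: mat_of_rows_def)

lemma dim_mat_adjoint [simp]:
  "dim_row (mat_adjoint A) = dim_col A" "dim_col (mat_adjoint A) = dim_row A"
  by (simp_all add: mat_adjoint_eq_mat)

lemma mat_adjoint_carrier: "A \<in> carrier_mat m n \<Longrightarrow> mat_adjoint A \<in> carrier_mat n m"
  by (intro carrier_matI) (simp_all add: carrier_matD)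

lemma index_mat_adjoint:
  "i < dim_col A \<Longrightarrow> j < dim_row A \<Longrightarrow> mat_adjoint A $$ (i, j) = conjugate (A $$ (j, i))"
  by (simp add: mat_adjoint_eq_mat)

lemma mod_less_of_less_mult: "(i::nat) < a * p \<Longrightarrow> i mod p < p"
  by (metis mod_less_divisor mult_0_right neq0_conv not_less0)

lemma sum_lessThan_mult_div_mod:
  "(\<Sum>m<(a::nat) * b. f (m div b) (m mod b)) = (\<Sum>i<a. \<Sum>j<b. (f i j :: 'a::comm_monoid_add))"
proof (cases "b = 0")
  case False
  have "(\<lambda>(i, j). i * b + j) ` ({..<a} \<times> {..<b}) \<subseteq> {..<a * b}"
  proof
    fix x assume "x \<in> (\<lambda>(i, j). i * b + j) ` ({..<a} \<times> {..<b})"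
    then obtain i j where x: "x = i * b + j" "i < a" "j < b" by auto
    have "i * b + j < (i + 1) * b" using x by simp
    also have "\<dots> \<le> a * b" using x by (intro mult_right_mono) auto
    finally show "x \<in> {..<a * b}" using x by simp
  qed
  then have bij: "bij_betw (\<lambda>m. (m div b, m mod b)) {..<a * b} ({..<a} \<times> {..<b})"
    by (intro bij_betw_byWitness[where f' = "\<lambda>(i, j). i * b + j"])
      (use False in \<open>auto simp: less_mult_imp_div_less\<close>)
  have "(\<Sum>m<a * b. f (m div b) (m mod b)) = (\<Sum>(i, j)\<in>{..<a} \<times> {..<b}. f i j)"
    using sum.reindex_bij_betw[OF bij, of "\<lambda>(i, j). f i j"] by simp
  also have "\<dots> = (\<Sum>i<a. \<Sum>j<b. f i j)" by (simp add: sum.cartesian_product)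
  finally show ?thesis .
qed simp

lemma sum_lessThan_mult_div_mod2:
  "(\<Sum>i<(a::nat) * p. \<Sum>j<(b::nat) * q. h (i div p) (i mod p) (j div q) (j mod q)) =
   (\<Sum>i1<a. \<Sum>i2<p. \<Sum>j1<b. \<Sum>j2<q. (h i1 i2 j1 j2 :: 'a::comm_monoid_add))"
proof -
  have "(\<Sum>i<a * p. \<Sum>j<b * q. h (i div p) (i mod p) (j div q) (j mod q)) =
        (\<Sum>i<a * p. \<Sum>j1<b. \<Sum>j2<q. h (i div p) (i mod p) j1 j2)"
    by (rule sum.cong[OF refl]) (rule sum_lessThan_mult_div_mod)
  also have "\<dots> = (\<Sum>i1<a. \<Sum>i2<p. \<Sum>j1<b. \<Sum>j2<q. h i1 i2 j1 j2)"
    by (rule sum_lessThan_mult_div_mod[of "\<lambda>i1 i2. \<Sum>j1<b. \<Sum>j2<q. h i1 i2 j1 j2"])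
  finally show ?thesis .
qed

lemma sum_lessThan_split_ends:
  "(d::nat) \<ge> 2 \<Longrightarrow> (\<Sum>i<d. f i) = f 0 + f (d - 1) + (\<Sum>i\<in>{1..<d - 1}. (f i :: 'a::comm_monoid_add))"
proof -
  assume "d \<ge> 2"
  moreover have "{..<d} = insert 0 (insert (d - 1) {1..<d - 1})" using \<open>d \<ge> 2\<close> by auto
  ultimately show ?thesis by (simp add: add.assoc)
qed

lemma sum_lessThan_ends:
  assumes "(d::nat) \<ge> 2" and "\<And>i. i < d \<Longrightarrow> i \<noteq> 0 \<Longrightarrow> i \<noteq> d - 1 \<Longrightarrow> f i = 0"
  shows "(\<Sum>i<d. f i) = f 0 + (f (d - 1) :: 'a::comm_monoid_add)"
proof -
  have "sum f {1..<d - 1} = 0" by (rule sum.neutral) (use assms(2) in auto)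
  then show ?thesis using sum_lessThan_split_ends[OF assms(1), of f] by simp
qed

lemma sum_lessThan_single:
  "(i::nat) < d \<Longrightarrow> (\<And>j. j < d \<Longrightarrow> j \<noteq> i \<Longrightarrow> f j = 0) \<Longrightarrow> (\<Sum>j<d. f j) = (f i :: 'a::comm_monoid_add)"
  by (subst sum.remove[of _ i]) (auto intro!: sum.neutral)

lemma dim_kron [simp]:
  "dim_row (kron A B) = dim_row A * dim_row B" "dim_col (kron A B) = dim_col A * dim_col B"
  by (simp_all add: kron_def)

lemma index_kron:
  "i < dim_row A * dim_row B \<Longrightarrow> j < dim_col A * dim_col B \<Longrightarrow>
   kron A B $$ (i, j) = A $$ (i div dim_row B, j div dim_col B) * B $$ (i mod dim_row B, j mod dim_col B)"
  by (simp add: kron_def)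

lemma kron_mult:
  assumes A: "A \<in> carrier_mat a b" and C: "C \<in> carrier_mat b c"
    and B: "B \<in> carrier_mat p q" and D: "D \<in> carrier_mat q r"
  shows "kron (A * C) (B * D) = kron A B * kron C D"
proof (rule eq_matI)
  fix i j assume "i < dim_row (kron A B * kron C D)" and "j < dim_col (kron A B * kron C D)"
  then have i: "i < a * p" and j: "j < c * r" using A B C D by auto
  note bounds = less_mult_imp_div_less[OF i] less_mult_imp_div_less[OF j]
    mod_less_of_less_mult[OF i] mod_less_of_less_mult[OF j]
  have "kron (A * C) (B * D) $$ (i, j) =
      (\<Sum>k<b. A $$ (i div p, k) * C $$ (k, j div r)) * (\<Sum>l<q. B $$ (i mod p, l) * D $$ (l, j mod r))"
    using A B C D i j bounds by (simp add: index_kron scalar_prod_def times_mat_def lessThan_atLeast0)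
  also have "\<dots> = (\<Sum>k<b. \<Sum>l<q. (A $$ (i div p, k) * B $$ (i mod p, l)) * (C $$ (k, j div r) * D $$ (l, j mod r)))"
    by (simp add: sum_product algebra_simps)
  also have "\<dots> = (\<Sum>m<b * q. (A $$ (i div p, m div q) * B $$ (i mod p, m mod q)) *
                                (C $$ (m div q, j div r) * D $$ (m mod q, j mod r)))"
    by (rule sum_lessThan_mult_div_mod[symmetric])
  also have "\<dots> = (kron A B * kron C D) $$ (i, j)"
    using A B C D i j bounds
    by (auto simp: scalar_prod_def times_mat_def lessThan_atLeast0 index_kron
        less_mult_imp_div_less mod_less_of_less_mult intro!: sum.cong)
  finally show "kron (A * C) (B * D) $$ (i, j) = (kron A B * kron C D) $$ (i, j)" .
qed (use A B C D in auto)

lemma mat_adjoint_kron: "mat_adjoint (kron A B) = kron (mat_adjoint A) (mat_adjoint B)"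
  by (rule eq_matI)
    (auto simp: mat_adjoint_eq_mat index_kron less_mult_imp_div_less mod_less_of_less_mult)

definition frob_inner :: "complex mat \<Rightarrow> complex mat \<Rightarrow> complex" where
  "frob_inner X Y = (\<Sum>i<dim_row X. \<Sum>j<dim_col X. conjugate (X $$ (i, j)) * Y $$ (i, j))"

lemma frob_inner_kron:
  assumes A: "A \<in> carrier_mat a b" and C: "C \<in> carrier_mat a b"
    and B: "B \<in> carrier_mat p q" and D: "D \<in> carrier_mat p q"
  shows "frob_inner (kron A B) (kron C D) = frob_inner A C * frob_inner B D"
proof -
  let ?h = "\<lambda>i1 i2 j1 j2. conjugate (A $$ (i1, j1) * B $$ (i2, j2)) * (C $$ (i1, j1) * D $$ (i2, j2))"
  have "frob_inner (kron A B) (kron C D) =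
      (\<Sum>i<a * p. \<Sum>j<b * q. ?h (i div p) (i mod p) (j div q) (j mod q))"
    unfolding frob_inner_def using A B C D by (auto simp: index_kron intro!: sum.cong)
  also have "\<dots> = (\<Sum>i1<a. \<Sum>i2<p. \<Sum>j1<b. \<Sum>j2<q. ?h i1 i2 j1 j2)"
    by (rule sum_lessThan_mult_div_mod2)
  also have "\<dots> = (\<Sum>i1<a. \<Sum>j1<b. \<Sum>i2<p. \<Sum>j2<q.
      (conjugate (A $$ (i1, j1)) * C $$ (i1, j1)) * (conjugate (B $$ (i2, j2)) * D $$ (i2, j2)))"
    by (rule sum.cong[OF refl], subst sum.swap) (simp add: algebra_simps)
  also have "\<dots> = (\<Sum>i1<a. \<Sum>j1<b. (conjugate (A $$ (i1, j1)) * C $$ (i1, j1)) *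
      (\<Sum>i2<p. \<Sum>j2<q. conjugate (B $$ (i2, j2)) * D $$ (i2, j2)))"
    by (simp add: sum_distrib_left)
  also have "\<dots> = frob_inner A C * frob_inner B D"
    unfolding frob_inner_def using A B by (simp add: sum_distrib_right)
  finally show ?thesis .
qed

lemma tensor_pow_carrier: "A \<in> carrier_mat d d \<Longrightarrow> tensor_pow n A \<in> carrier_mat (d ^ n) (d ^ n)"
  by (induction n) auto

lemma tensor_pow_mult:
  assumes "A \<in> carrier_mat d d" and "C \<in> carrier_mat d d"
  shows "tensor_pow n (A * C) = tensor_pow n A * tensor_pow n C"
proof (induction n)
  case (Suc n)
  then show ?case
    using kron_mult[OF assms tensor_pow_carrier[OF assms(1)] tensor_pow_carrier[OF assms(2)]] by simp
qed simp

lemma tensor_pow_adjoint: "tensor_pow n (mat_adjoint A) = mat_adjoint (tensor_pow n A)"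
proof (induction n)
  case 0 show ?case by (rule eq_matI) (auto simp: mat_adjoint_eq_mat)
next
  case (Suc n) then show ?case by (simp add: mat_adjoint_kron)
qed

lemma frob_inner_tensor_pow:
  assumes "A \<in> carrier_mat d d" and "C \<in> carrier_mat d d"
  shows "frob_inner (tensor_pow n A) (tensor_pow n C) = frob_inner A C ^ n"
proof (induction n)
  case 0 show ?case by (simp add: frob_inner_def)
next
  case (Suc n)
  then show ?case
    using frob_inner_kron[OF assms tensor_pow_carrier[OF assms(1)] tensor_pow_carrier[OF assms(2)]] by simp
qed

lemma mtrace_mult_adjoint: "B \<in> carrier_mat d d \<Longrightarrow> mtrace (B * mat_adjoint B) = frob_inner B B"
  unfolding mtrace_def frob_inner_def
  by (auto intro!: sum.cong simp: mat_adjoint_eq_mat times_mat_def scalar_prod_def mult.commute lessThan_atLeast0)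

lemma psd_mult_adjoint:
  assumes B: "B \<in> carrier_mat d d"
  shows "psd (B * mat_adjoint B)"
  unfolding psd_def
proof (intro conjI ballI)
  show "hermitian (B * mat_adjoint B)"
    unfolding hermitian_def using B
    by (auto intro!: eq_matI sum.cong simp: mat_adjoint_eq_mat times_mat_def scalar_prod_def mult.commute)
  fix v :: "complex vec" assume "v \<in> carrier_vec (dim_row (B * mat_adjoint B))"
  then have v: "dim_vec v = d" using B by simp
  define w where "w l = (\<Sum>i<d. cnj (v $ i) * B $$ (i, l))" for l
  have cnj_w: "cnj (w l) = (\<Sum>k<d. cnj (B $$ (k, l)) * v $ k)" for l
    unfolding w_def by (simp add: mult.commute)
  have "conjugate v \<bullet> (B * mat_adjoint B *\<^sub>v v) =
      (\<Sum>i<d. cnj (v $ i) * (\<Sum>k<d. (\<Sum>l<d. B $$ (i, l) * cnj (B $$ (k, l))) * v $ k))"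
    using B v by (auto simp: scalar_prod_def mult_mat_vec_def times_mat_def mat_adjoint_eq_mat
        lessThan_atLeast0 intro!: sum.cong)
  also have "\<dots> = (\<Sum>i<d. \<Sum>k<d. \<Sum>l<d. (cnj (v $ i) * B $$ (i, l)) * (cnj (B $$ (k, l)) * v $ k))"
    by (simp add: sum_distrib_left sum_distrib_right algebra_simps)
  also have "\<dots> = (\<Sum>i<d. \<Sum>l<d. \<Sum>k<d. (cnj (v $ i) * B $$ (i, l)) * (cnj (B $$ (k, l)) * v $ k))"
    by (rule sum.cong[OF refl], rule sum.swap)
  also have "\<dots> = (\<Sum>l<d. \<Sum>i<d. \<Sum>k<d. (cnj (v $ i) * B $$ (i, l)) * (cnj (B $$ (k, l)) * v $ k))"
    by (rule sum.swap)
  also have "\<dots> = (\<Sum>l<d. w l * cnj (w l))"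
    unfolding cnj_w unfolding w_def by (simp add: sum_product)
  finally have "Re (conjugate v \<bullet> (B * mat_adjoint B *\<^sub>v v)) = (\<Sum>l<d. Re (w l * cnj (w l)))"
    by (simp add: Re_sum)
  also have "\<dots> \<ge> 0" by (intro sum_nonneg) (simp add: power2_eq_square[symmetric])
  finally show "0 \<le> Re (conjugate v \<bullet> (B * mat_adjoint B *\<^sub>v v))" .
qed

lemma sum_proots_char_poly_diagonal:
  fixes G :: "complex mat"
  assumes G: "G \<in> carrier_mat d d" and diag: "\<And>i j. i < d \<Longrightarrow> j < d \<Longrightarrow> i \<noteq> j \<Longrightarrow> G $$ (i, j) = 0"
  shows "(\<Sum>z \<in># proots (char_poly G). f z) = (\<Sum>i<d. f (G $$ (i, i)))"
proof -
  have proots_linear_factors: "proots (\<Prod>a \<leftarrow> xs. [:- a, 1:]) = mset xs" for xs :: "complex list"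
  proof (induction xs)
    case (Cons a xs)
    have "(\<Prod>a \<leftarrow> xs. [:- a, 1:]) \<noteq> 0" by (auto simp: prod_list_zero_iff)
    then have "proots ([:- a, 1:] * (\<Prod>a \<leftarrow> xs. [:- a, 1:])) = proots [:- a, 1:] + mset xs"
      using Cons by (subst proots_mult) auto
    then show ?case by (simp only: list.map prod_list.Cons) simp
  qed simp
  have "upper_triangular G" using G diag unfolding upper_triangular_def by auto
  then have "proots (char_poly G) = mset (diag_mat G)"
    by (simp add: char_poly_upper_triangular[OF G] proots_linear_factors)
  then have "(\<Sum>z \<in># proots (char_poly G). f z) = sum_list (map f (diag_mat G))"
    by (metis mset_map sum_mset_sum_list)
  also have "\<dots> = (\<Sum>i<d. f (G $$ (i, i)))"
    using G by (simp add: diag_mat_def o_def sum_list_sum_nth lessThan_atLeast0)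
  finally show ?thesis .
qed

definition qform :: "complex mat \<Rightarrow> nat \<Rightarrow> (nat \<Rightarrow> complex) \<Rightarrow> real" where
  "qform M D v = Re (\<Sum>i<D. \<Sum>k<D. cnj (v i) * M $$ (i, k) * v k)"

lemma qform_eq_inner: "M \<in> carrier_mat D D \<Longrightarrow> qform M D v = Re (conjugate (vec D v) \<bullet> (M *\<^sub>v vec D v))"
  unfolding qform_def
  by (auto simp: scalar_prod_def mult_mat_vec_def lessThan_atLeast0 sum_distrib_left mult.assoc
      intro!: sum.cong arg_cong[where f = Re])

lemma qform_nonneg: "M \<in> carrier_mat D D \<Longrightarrow> psd M \<Longrightarrow> 0 \<le> qform M D v"
  by (simp add: qform_eq_inner psd_def)

lemma qform_le_sum_sq:
  assumes M: "M \<in> carrier_mat D D" and "psd (1\<^sub>m D - M)"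
  shows "qform M D v \<le> (\<Sum>k<D. Re (cnj (v k) * v k))"
proof -
  have "0 \<le> qform (1\<^sub>m D - M) D v" using assms by (intro qform_nonneg) auto
  also have "(\<Sum>i<D. \<Sum>k<D. cnj (v i) * (1\<^sub>m D - M) $$ (i, k) * v k) =
      (\<Sum>i<D. \<Sum>k<D. (if k = i then cnj (v i) * v i else 0) - cnj (v i) * M $$ (i, k) * v k)"
    using M by (intro sum.cong refl) (auto simp: algebra_simps)
  then have "qform (1\<^sub>m D - M) D v = (\<Sum>k<D. Re (cnj (v k) * v k)) - qform M D v"
    unfolding qform_def by (simp add: sum_subtractf Re_sum)
  finally show ?thesis by simp
qed

lemma qform_polarization:
  "r * qform M D (\<lambda>k. a k + b k) + qform M D (\<lambda>k. of_real r * a k - b k) =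
   r * (1 + r) * qform M D a + (1 + r) * qform M D b"
proof -
  have pointwise: "of_real r * (cnj (a i + b i) * M $$ (i, k) * (a k + b k)) +
      cnj (of_real r * a i - b i) * M $$ (i, k) * (of_real r * a k - b k) =
      of_real (r * (1 + r)) * (cnj (a i) * M $$ (i, k) * a k) + of_real (1 + r) * (cnj (b i) * M $$ (i, k) * b k)"
    for i k by (simp add: algebra_simps)
  have "of_real r * (\<Sum>i<D. \<Sum>k<D. cnj (a i + b i) * M $$ (i, k) * (a k + b k)) +
      (\<Sum>i<D. \<Sum>k<D. cnj (of_real r * a i - b i) * M $$ (i, k) * (of_real r * a k - b k)) =
      of_real (r * (1 + r)) * (\<Sum>i<D. \<Sum>k<D. cnj (a i) * M $$ (i, k) * a k) +
      of_real (1 + r) * (\<Sum>i<D. \<Sum>k<D. cnj (b i) * M $$ (i, k) * b k)"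
    by (simp only: sum_distrib_left sum.distrib[symmetric] pointwise)
  from arg_cong[where f = Re, OF this] show ?thesis
    unfolding qform_def by simp
qed

lemma qform_add_le:
  assumes "M \<in> carrier_mat D D" and "psd M" and r: "r > 0"
  shows "qform M D (\<lambda>k. a k + b k) \<le> (1 + r) * qform M D a + (1 + 1/r) * qform M D b"
proof -
  have "r * qform M D (\<lambda>k. a k + b k) \<le> r * (1 + r) * qform M D a + (1 + r) * qform M D b"
    using qform_polarization[of r M D a b] qform_nonneg[OF assms(1,2), of "\<lambda>k. of_real r * a k - b k"]
    by linarith
  also have "\<dots> = r * ((1 + r) * qform M D a + (1 + 1/r) * qform M D b)"
    using r by (simp add: field_simps)
  finally show ?thesis using r by simp
qed

lemma trace_mult_gram_eq_sum_qform:
  assumes M: "M \<in> carrier_mat D D" and X: "X \<in> carrier_mat D D"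
  shows "Re (mtrace (M * (X * mat_adjoint X))) = (\<Sum>j<D. qform M D (\<lambda>k. X $$ (k, j)))"
proof -
  have "mtrace (M * (X * mat_adjoint X)) = (\<Sum>i<D. \<Sum>k<D. M $$ (i, k) * (\<Sum>j<D. X $$ (k, j) * cnj (X $$ (i, j))))"
    unfolding mtrace_def using assms
    by (auto simp: times_mat_def scalar_prod_def index_mat_adjoint lessThan_atLeast0 intro!: sum.cong)
  also have "\<dots> = (\<Sum>i<D. \<Sum>k<D. \<Sum>j<D. cnj (X $$ (i, j)) * M $$ (i, k) * X $$ (k, j))"
    by (simp add: sum_distrib_left algebra_simps)
  also have "\<dots> = (\<Sum>i<D. \<Sum>j<D. \<Sum>k<D. cnj (X $$ (i, j)) * M $$ (i, k) * X $$ (k, j))"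
    by (rule sum.cong[OF refl], rule sum.swap)
  also have "\<dots> = (\<Sum>j<D. \<Sum>i<D. \<Sum>k<D. cnj (X $$ (i, j)) * M $$ (i, k) * X $$ (k, j))"
    by (rule sum.swap)
  finally show ?thesis unfolding qform_def by (simp add: Re_sum)
qed

text \<open>The last factor on the right is the squared Frobenius distance of X and Y.\<close>

lemma effect_trace_gram_le:
  assumes M: "M \<in> carrier_mat D D" and psd_M: "psd M" and psd_1_M: "psd (1\<^sub>m D - M)"
    and X: "X \<in> carrier_mat D D" and Y: "Y \<in> carrier_mat D D" and r: "r > 0"
  shows "Re (mtrace (M * (X * mat_adjoint X))) \<le> (1 + r) * Re (mtrace (M * (Y * mat_adjoint Y)))
     + (1 + 1/r) * (Re (frob_inner X X) + Re (frob_inner Y Y) - 2 * Re (frob_inner X Y))"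
proof -
  let ?y = "\<lambda>j k. Y $$ (k, j)" and ?e = "\<lambda>j k. X $$ (k, j) - Y $$ (k, j)"
  have "Re (mtrace (M * (X * mat_adjoint X))) = (\<Sum>j<D. qform M D (\<lambda>k. ?y j k + ?e j k))"
    using trace_mult_gram_eq_sum_qform[OF M X] by simp
  also have "\<dots> \<le> (\<Sum>j<D. (1 + r) * qform M D (?y j) + (1 + 1/r) * (\<Sum>k<D. Re (cnj (?e j k) * ?e j k)))"
  proof (rule sum_mono)
    fix j
    have "qform M D (\<lambda>k. ?y j k + ?e j k) \<le> (1 + r) * qform M D (?y j) + (1 + 1/r) * qform M D (?e j)"
      by (rule qform_add_le[OF M psd_M r])
    also have "\<dots> \<le> (1 + r) * qform M D (?y j) + (1 + 1/r) * (\<Sum>k<D. Re (cnj (?e j k) * ?e j k))"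
      using qform_le_sum_sq[OF M psd_1_M, of "?e j"] r by (intro add_left_mono mult_left_mono) auto
    finally show "qform M D (\<lambda>k. ?y j k + ?e j k) \<le> \<dots>" .
  qed
  also have "\<dots> = (1 + r) * Re (mtrace (M * (Y * mat_adjoint Y))) +
      (1 + 1/r) * (\<Sum>j<D. \<Sum>k<D. Re (cnj (?e j k) * ?e j k))"
    using trace_mult_gram_eq_sum_qform[OF M Y] by (simp add: sum.distrib sum_distrib_left)
  also have "(\<Sum>j<D. \<Sum>k<D. Re (cnj (?e j k) * ?e j k)) =
      (\<Sum>k<D. \<Sum>j<D. Re (cnj (X $$ (k, j)) * X $$ (k, j)) + Re (cnj (Y $$ (k, j)) * Y $$ (k, j))
        - 2 * Re (cnj (X $$ (k, j)) * Y $$ (k, j)))"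
    by (subst sum.swap) (simp add: algebra_simps)
  also have "\<dots> = Re (frob_inner X X) + Re (frob_inner Y Y) - 2 * Re (frob_inner X Y)"
    unfolding frob_inner_def using X Y by (simp add: Re_sum sum.distrib sum_subtractf sum_distrib_left)
  finally show ?thesis .
qed

lemma copies_lower_bound_of_overlap:
  assumes M: "two_outcome_povm (d ^ n) M"
    and A: "A \<in> carrier_mat d d" and B: "B \<in> carrier_mat d d"
    and AA: "frob_inner A A = 1" and BB: "frob_inner B B = 1" and AB: "frob_inner A B = of_real t"
    and t: "0 \<le> t"
    and accept_A: "accept_prob M n (A * mat_adjoint A) \<ge> 2/3"
    and accept_B: "accept_prob M n (B * mat_adjoint B) \<le> 1/3"
  shows "1 \<le> 36 * real n * (1 - t)"
proof -
  define X where "X = tensor_pow n A"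
  define Y where "Y = tensor_pow n B"
  have X: "X \<in> carrier_mat (d ^ n) (d ^ n)" and Y: "Y \<in> carrier_mat (d ^ n) (d ^ n)"
    unfolding X_def Y_def using A B by (simp_all add: tensor_pow_carrier)
  have gram_X: "tensor_pow n (A * mat_adjoint A) = X * mat_adjoint X"
    unfolding X_def tensor_pow_mult[OF A mat_adjoint_carrier[OF A]] tensor_pow_adjoint ..
  have gram_Y: "tensor_pow n (B * mat_adjoint B) = Y * mat_adjoint Y"
    unfolding Y_def tensor_pow_mult[OF B mat_adjoint_carrier[OF B]] tensor_pow_adjoint ..
  have overlaps: "frob_inner X X = 1" "frob_inner Y Y = 1" "Re (frob_inner X Y) = t ^ n"
    unfolding X_def Y_def frob_inner_tensor_pow[OF A A] frob_inner_tensor_pow[OF B B]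
      frob_inner_tensor_pow[OF A B] AA BB AB by (simp_all flip: of_real_power)
  from M have "Re (mtrace (M * (X * mat_adjoint X))) \<le> (1 + 1/2) * Re (mtrace (M * (Y * mat_adjoint Y)))
     + (1 + 1/(1/2)) * (Re (frob_inner X X) + Re (frob_inner Y Y) - 2 * Re (frob_inner X Y))"
    unfolding two_outcome_povm_def by (intro effect_trace_gram_le[OF _ _ _ X Y]) auto
  then have "2/3 \<le> 3/2 * (1/3) + 3 * (2 - 2 * t ^ n)"
    using accept_A accept_B unfolding accept_prob_def gram_X gram_Y overlaps by simp
  then have "1/36 \<le> 1 - t ^ n" by simp
  also have "1 - t ^ n \<le> real n * (1 - t)"
    using Bernoulli_inequality[of "t - 1" n] t by (simp add: algebra_simps)
  finally show ?thesis by simp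
qed

text \<open>rot_factor d l c s a b is R \<cdot> diag (a, sqrt (l 1), ..., sqrt (l (d - 2)), b), where R rotates the
  plane of the first and last coordinates with cosine c and sine s.\<close>

definition rot_entry :: "nat \<Rightarrow> (nat \<Rightarrow> real) \<Rightarrow> real \<Rightarrow> real \<Rightarrow> real \<Rightarrow> real \<Rightarrow> nat \<Rightarrow> nat \<Rightarrow> real" where
  "rot_entry d l c s a b i j = (if i = 0 \<and> j = 0 then c * a else if i = 0 \<and> j = d - 1 then - (s * b)
     else if i = d - 1 \<and> j = 0 then s * a else if i = d - 1 \<and> j = d - 1 then c * b
     else if i = j then sqrt (l i) else 0)"

definition rot_factor :: "nat \<Rightarrow> (nat \<Rightarrow> real) \<Rightarrow> real \<Rightarrow> real \<Rightarrow> real \<Rightarrow> real \<Rightarrow> complex mat" where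
  "rot_factor d l c s a b = mat d d (\<lambda>(i, j). complex_of_real (rot_entry d l c s a b i j))"

definition rot_gram_entry :: "nat \<Rightarrow> (nat \<Rightarrow> real) \<Rightarrow> real \<Rightarrow> real \<Rightarrow> real \<Rightarrow> real \<Rightarrow> nat \<Rightarrow> nat \<Rightarrow> real" where
  "rot_gram_entry d l c s a b i j = (if i = 0 \<and> j = 0 then c\<^sup>2 * a\<^sup>2 + s\<^sup>2 * b\<^sup>2
     else if (i = 0 \<and> j = d - 1) \<or> (i = d - 1 \<and> j = 0) then c * s * (a\<^sup>2 - b\<^sup>2)
     else if i = d - 1 \<and> j = d - 1 then s\<^sup>2 * a\<^sup>2 + c\<^sup>2 * b\<^sup>2
     else if i = j then l i else 0)"

lemma rot_factor_carrier [simp]: "rot_factor d l c s a b \<in> carrier_mat d d"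
  by (simp add: rot_factor_def)

lemma rot_entry_off_plane:
  "i \<noteq> 0 \<Longrightarrow> i \<noteq> d - 1 \<Longrightarrow> rot_entry d l c s a b i j = (if i = j then sqrt (l i) else 0)"
  "j \<noteq> 0 \<Longrightarrow> j \<noteq> d - 1 \<Longrightarrow> rot_entry d l c s a b i j = (if i = j then sqrt (l i) else 0)"
  by (auto simp: rot_entry_def)

lemma rot_entry_plane:
  assumes "d - Suc 0 \<noteq> 0"
  shows "rot_entry d l c s a b 0 0 = c * a" "rot_entry d l c s a b 0 (d - Suc 0) = - (s * b)"
    "rot_entry d l c s a b (d - Suc 0) 0 = s * a" "rot_entry d l c s a b (d - Suc 0) (d - Suc 0) = c * b"
  using assms by (auto simp: rot_entry_def)

lemma sum_rot_entry_mult: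
  assumes d: "d \<ge> 2" and l: "\<forall>i<d. 0 \<le> l i" and i: "i < d" and j: "j < d"
  shows "(\<Sum>m<d. rot_entry d l c s a b i m * rot_entry d l c' s' a' b' j m) =
    (if i = 0 \<and> j = 0 then c * c' * a * a' + s * s' * b * b'
     else if i = 0 \<and> j = d - 1 then c * s' * a * a' - s * c' * b * b'
     else if i = d - 1 \<and> j = 0 then s * c' * a * a' - c * s' * b * b'
     else if i = d - 1 \<and> j = d - 1 then s * s' * a * a' + c * c' * b * b'
     else if i = j then l i else 0)"
proof -
  have last: "d - 1 \<noteq> 0" using d by simp
  show ?thesis
  proof (cases "i = 0 \<or> i = d - 1")
    case True
    have "(\<Sum>m<d. rot_entry d l c s a b i m * rot_entry d l c' s' a' b' j m) =
        rot_entry d l c s a b i 0 * rot_entry d l c' s' a' b' j 0 +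
        rot_entry d l c s a b i (d - 1) * rot_entry d l c' s' a' b' j (d - 1)"
      by (rule sum_lessThan_ends[OF d]) (use True in \<open>auto simp: rot_entry_def\<close>)
    moreover have "j \<noteq> 0 \<Longrightarrow> j \<noteq> d - 1 \<Longrightarrow>
        rot_entry d l c' s' a' b' j 0 = 0 \<and> rot_entry d l c' s' a' b' j (d - 1) = 0"
      using last by (simp add: rot_entry_off_plane)
    ultimately show ?thesis using True last
      by (cases "j = 0"; cases "j = d - 1"; cases "i = 0") (simp_all add: rot_entry_plane)
  next
    case False
    have "(\<Sum>m<d. rot_entry d l c s a b i m * rot_entry d l c' s' a' b' j m) =
        rot_entry d l c s a b i i * rot_entry d l c' s' a' b' j i"
      by (rule sum_lessThan_single[OF i]) (use False in \<open>auto simp: rot_entry_def\<close>)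
    then show ?thesis using False last l i by (auto simp: rot_entry_off_plane)
  qed
qed

lemma rot_factor_gram:
  assumes d: "d \<ge> 2" and l: "\<forall>i<d. 0 \<le> l i"
  shows "rot_factor d l c s a b * mat_adjoint (rot_factor d l c s a b) =
    mat d d (\<lambda>(i, j). complex_of_real (rot_gram_entry d l c s a b i j))"
proof (rule eq_matI)
  fix i j assume "i < dim_row (mat d d (\<lambda>(i, j). complex_of_real (rot_gram_entry d l c s a b i j)))"
    and "j < dim_col (mat d d (\<lambda>(i, j). complex_of_real (rot_gram_entry d l c s a b i j)))"
  then have i: "i < d" and j: "j < d" by auto
  have "(rot_factor d l c s a b * mat_adjoint (rot_factor d l c s a b)) $$ (i, j) =
      complex_of_real (\<Sum>m<d. rot_entry d l c s a b i m * rot_entry d l c s a b j m)"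
    using i j by (simp add: rot_factor_def times_mat_def scalar_prod_def mat_adjoint_eq_mat lessThan_atLeast0)
  also have "\<dots> = complex_of_real (rot_gram_entry d l c s a b i j)"
    using sum_rot_entry_mult[OF d l i j, of c s a b c s a b]
    by (simp add: rot_gram_entry_def power2_eq_square algebra_simps)
  finally show "(rot_factor d l c s a b * mat_adjoint (rot_factor d l c s a b)) $$ (i, j) =
      mat d d (\<lambda>(i, j). complex_of_real (rot_gram_entry d l c s a b i j)) $$ (i, j)"
    using i j by simp
qed (auto simp: rot_factor_def)

lemma frob_inner_rot_factor:
  assumes d: "d \<ge> 2" and l: "\<forall>i<d. 0 \<le> l i"
  shows "frob_inner (rot_factor d l c s a b) (rot_factor d l c' s' a' b') = complex_of_real
    (c * c' * a * a' + s * s' * b * b' + s * s' * a * a' + c * c' * b * b' + (\<Sum>i\<in>{1..<d - 1}. l i))"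
proof -
  have last: "d - 1 \<noteq> 0" using d by simp
  have "frob_inner (rot_factor d l c s a b) (rot_factor d l c' s' a' b') =
      complex_of_real (\<Sum>i<d. \<Sum>m<d. rot_entry d l c s a b i m * rot_entry d l c' s' a' b' i m)"
    by (simp add: frob_inner_def rot_factor_def)
  also have "(\<Sum>i<d. \<Sum>m<d. rot_entry d l c s a b i m * rot_entry d l c' s' a' b' i m) =
      (\<Sum>i<d. if i = 0 then c * c' * a * a' + s * s' * b * b'
              else if i = d - 1 then s * s' * a * a' + c * c' * b * b' else l i)"
    by (rule sum.cong[OF refl]) (use last in \<open>auto simp: sum_rot_entry_mult[OF d l]\<close>)
  also have "\<dots> = c * c' * a * a' + s * s' * b * b' + s * s' * a * a' + c * c' * b * b' + (\<Sum>i\<in>{1..<d - 1}. l i)"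
    by (subst sum_lessThan_split_ends[OF d]) (use last in auto)
  finally show ?thesis .
qed

lemma frob_inner_rot_factor_self:
  assumes d: "d \<ge> 2" and l: "\<forall>i<d. 0 \<le> l i" and sum_l: "(\<Sum>i<d. l i) = 1"
    and ab: "a\<^sup>2 + b\<^sup>2 = l 0 + l (d - 1)" and cs: "c\<^sup>2 + s\<^sup>2 = 1"
  shows "frob_inner (rot_factor d l c s a b) (rot_factor d l c s a b) = 1"
proof -
  have "c * c * a * a + s * s * b * b + s * s * a * a + c * c * b * b = (c\<^sup>2 + s\<^sup>2) * (a\<^sup>2 + b\<^sup>2)"
    by (simp add: power2_eq_square algebra_simps)
  also have "\<dots> = l 0 + l (d - 1)" using ab cs by simp
  finally have plane: "c * c * a * a + s * s * b * b + s * s * a * a + c * c * b * b = l 0 + l (d - 1)" .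
  have "l 0 + l (d - 1) + (\<Sum>i\<in>{1..<d - 1}. l i) = 1"
    using sum_lessThan_split_ends[OF d, of l] sum_l by simp
  then show ?thesis by (simp only: frob_inner_rot_factor[OF d l] plane) simp
qed

lemma diag_state_eq_rot_factor_gram:
  assumes d: "d \<ge> 2" and l: "\<forall>i<d. 0 \<le> l i"
  shows "diag_state d l = rot_factor d l 1 0 (sqrt (l 0)) (sqrt (l (d - 1))) *
    mat_adjoint (rot_factor d l 1 0 (sqrt (l 0)) (sqrt (l (d - 1))))"
  unfolding rot_factor_gram[OF d l] diag_state_def
  by (rule eq_matI) (use d l in \<open>auto simp: rot_gram_entry_def\<close>)

lemma density_matrix_rot_factor_gram:
  assumes d: "d \<ge> 2" and l: "\<forall>i<d. 0 \<le> l i" and sum_l: "(\<Sum>i<d. l i) = 1"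
    and ab: "a\<^sup>2 + b\<^sup>2 = l 0 + l (d - 1)" and cs: "c\<^sup>2 + s\<^sup>2 = 1"
  shows "density_matrix d (rot_factor d l c s a b * mat_adjoint (rot_factor d l c s a b))"
  unfolding density_matrix_def
  using mult_carrier_mat[OF rot_factor_carrier mat_adjoint_carrier[OF rot_factor_carrier]]
    psd_mult_adjoint[OF rot_factor_carrier] mtrace_mult_adjoint[OF rot_factor_carrier]
    frob_inner_rot_factor_self[OF assms]
  by simp

text \<open>The difference of the two Gram matrices is a traceless symmetric 2 \<times> 2 block in the
  rotated plane, because both states have weight l 0 + l (d - 1) there.\<close>

definition refl_entry :: "nat \<Rightarrow> real \<Rightarrow> real \<Rightarrow> nat \<Rightarrow> nat \<Rightarrow> real" where
  "refl_entry d x y i j = (if i = 0 \<and> j = 0 then x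
     else if (i = 0 \<and> j = d - 1) \<or> (i = d - 1 \<and> j = 0) then y
     else if i = d - 1 \<and> j = d - 1 then - x else 0)"

lemma rot_factor_gram_minus_diag_state:
  assumes d: "d \<ge> 2" and l: "\<forall>i<d. 0 \<le> l i"
    and ab: "a\<^sup>2 + b\<^sup>2 = l 0 + l (d - 1)" and cs: "c\<^sup>2 + s\<^sup>2 = 1"
  shows "rot_factor d l c s a b * mat_adjoint (rot_factor d l c s a b) - diag_state d l =
    mat d d (\<lambda>(i, j). complex_of_real (refl_entry d (c\<^sup>2 * a\<^sup>2 + s\<^sup>2 * b\<^sup>2 - l 0) (c * s * (a\<^sup>2 - b\<^sup>2)) i j))"
proof -
  have "(c\<^sup>2 + s\<^sup>2) * (a\<^sup>2 + b\<^sup>2) = l 0 + l (d - 1)" using ab cs by simp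
  then have traceless: "s\<^sup>2 * a\<^sup>2 + c\<^sup>2 * b\<^sup>2 - l (d - 1) = - (c\<^sup>2 * a\<^sup>2 + s\<^sup>2 * b\<^sup>2 - l 0)"
    by (simp add: algebra_simps)
  have "d - 1 \<noteq> 0" using d by simp
  then show ?thesis
    unfolding rot_factor_gram[OF d l] diag_state_def
    by (intro eq_matI)
      (use arg_cong[OF traceless, of complex_of_real] in \<open>auto simp: rot_gram_entry_def refl_entry_def\<close>)
qed

lemma trace_norm_refl_block:
  assumes d: "d \<ge> 2"
  shows "trace_norm (mat d d (\<lambda>(i, j). complex_of_real (refl_entry d x y i j))) = 2 * sqrt (x\<^sup>2 + y\<^sup>2)"
proof -
  let ?P = "mat d d (\<lambda>(i, j). complex_of_real (refl_entry d x y i j))"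
  let ?G = "mat d d (\<lambda>(i, j). complex_of_real (if i = j \<and> (i = 0 \<or> i = d - 1) then x\<^sup>2 + y\<^sup>2 else 0))"
  have last: "d - 1 \<noteq> 0" using d by simp
  have gram: "mat_adjoint ?P * ?P = ?G"
  proof (rule eq_matI)
    fix i j assume "i < dim_row ?G" and "j < dim_col ?G"
    then have i: "i < d" and j: "j < d" by auto
    have "(mat_adjoint ?P * ?P) $$ (i, j) = complex_of_real (\<Sum>m<d. refl_entry d x y m i * refl_entry d x y m j)"
      using i j by (simp add: times_mat_def scalar_prod_def mat_adjoint_eq_mat lessThan_atLeast0)
    also have "(\<Sum>m<d. refl_entry d x y m i * refl_entry d x y m j) =
        refl_entry d x y 0 i * refl_entry d x y 0 j + refl_entry d x y (d - 1) i * refl_entry d x y (d - 1) j"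
      by (rule sum_lessThan_ends[OF d]) (auto simp: refl_entry_def)
    also have "\<dots> = (if i = j \<and> (i = 0 \<or> i = d - 1) then x\<^sup>2 + y\<^sup>2 else 0)"
      using last by (auto simp: refl_entry_def power2_eq_square algebra_simps)
    finally show "(mat_adjoint ?P * ?P) $$ (i, j) = ?G $$ (i, j)" using i j by simp
  qed auto
  have "trace_norm ?P = (\<Sum>i<d. sqrt (Re (?G $$ (i, i))))"
    unfolding trace_norm_def gram by (rule sum_proots_char_poly_diagonal) auto
  also have "\<dots> = (\<Sum>i<d. if i = 0 \<or> i = d - 1 then sqrt (x\<^sup>2 + y\<^sup>2) else 0)"
    by (rule sum.cong) auto
  also have "\<dots> = 2 * sqrt (x\<^sup>2 + y\<^sup>2)"
    by (subst sum_lessThan_ends[OF d]) (use last in auto)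
  finally show ?thesis .
qed

lemma copies_lower_bound_rotation:
  assumes d: "d \<ge> 2" and l: "\<forall>i<d. 0 \<le> l i" and sum_l: "(\<Sum>i<d. l i) = 1"
    and cert: "certifies d (diag_state d l) \<epsilon> n M" and \<epsilon>: "\<epsilon> > 0"
    and ab: "a\<^sup>2 + b\<^sup>2 = l 0 + l (d - 1)" and cs: "c\<^sup>2 + s\<^sup>2 = 1"
    and far: "\<epsilon> \<le> 2 * sqrt ((c\<^sup>2 * a\<^sup>2 + s\<^sup>2 * b\<^sup>2 - l 0)\<^sup>2 + (c * s * (a\<^sup>2 - b\<^sup>2))\<^sup>2)"
    and t: "t = c * (sqrt (l 0) * a + sqrt (l (d - 1)) * b) + (\<Sum>i\<in>{1..<d - 1}. l i)"
    and t_nonneg: "0 \<le> t" and t_close: "1 - t \<le> 4 * \<epsilon>\<^sup>2"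
  shows "1 / (144 * \<epsilon>\<^sup>2) \<le> real n"
proof -
  define A where "A = rot_factor d l 1 0 (sqrt (l 0)) (sqrt (l (d - 1)))"
  define B where "B = rot_factor d l c s a b"
  have l_ends: "0 \<le> l 0" "0 \<le> l (d - 1)" using l d by auto
  have "density_matrix d (B * mat_adjoint B)"
    unfolding B_def by (rule density_matrix_rot_factor_gram[OF d l sum_l ab cs])
  moreover have "trace_norm (B * mat_adjoint B - diag_state d l) \<ge> \<epsilon>"
    unfolding B_def rot_factor_gram_minus_diag_state[OF d l ab cs] trace_norm_refl_block[OF d] by (rule far)
  ultimately have M: "two_outcome_povm (d ^ n) M"
    and accept_A: "accept_prob M n (A * mat_adjoint A) \<ge> 2/3"
    and accept_B: "accept_prob M n (B * mat_adjoint B) \<le> 1/3"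
    using cert unfolding certifies_def A_def diag_state_eq_rot_factor_gram[OF d l, symmetric] by auto
  have "frob_inner A A = 1"
    unfolding A_def by (rule frob_inner_rot_factor_self[OF d l sum_l]) (use l_ends in simp_all)
  moreover have "frob_inner B B = 1"
    unfolding B_def by (rule frob_inner_rot_factor_self[OF d l sum_l ab cs])
  moreover have "frob_inner A B = complex_of_real t"
    unfolding A_def B_def t frob_inner_rot_factor[OF d l] by (simp add: algebra_simps)
  ultimately have "1 \<le> 36 * real n * (1 - t)"
    using copies_lower_bound_of_overlap[OF M _ _ _ _ _ t_nonneg accept_A accept_B]
    unfolding A_def B_def by simp
  also have "\<dots> \<le> 36 * real n * (4 * \<epsilon>\<^sup>2)" using t_close by (intro mult_left_mono) auto
  finally show ?thesis using \<epsilon> by (simp add: field_simps)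
qed

lemma plane_rotation_deviation:
  fixes c s p q :: real
  assumes "c\<^sup>2 + s\<^sup>2 = 1"
  shows "(c\<^sup>2 * p + s\<^sup>2 * q - p)\<^sup>2 + (c * s * (p - q))\<^sup>2 = (s * (p - q))\<^sup>2"
proof -
  have diag: "c\<^sup>2 * p + s\<^sup>2 * q - p = - (s\<^sup>2 * (p - q))"
    using assms by (simp add: eq_diff_eq[of "c\<^sup>2" 1 "s\<^sup>2", THEN iffD2] algebra_simps)
  have "(c\<^sup>2 * p + s\<^sup>2 * q - p)\<^sup>2 + (c * s * (p - q))\<^sup>2 = (s * (p - q))\<^sup>2 * (s\<^sup>2 + c\<^sup>2)"
    unfolding diag by (simp add: power2_eq_square algebra_simps)
  also have "\<dots> = (s * (p - q))\<^sup>2" using assms by (simp add: add.commute)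
  finally show ?thesis .
qed

lemma copies_lower_bound_large_gap:
  assumes d: "d \<ge> 2" and l: "\<forall>i<d. 0 \<le> l i" and sum_l: "(\<Sum>i<d. l i) = 1"
    and cert: "certifies d (diag_state d l) \<epsilon> n M" and \<epsilon>: "0 < \<epsilon>" "\<epsilon> < 1/2"
    and gap: "1/4 \<le> l 0 - l (d - 1)"
  shows "1 / (144 * \<epsilon>\<^sup>2) \<le> real n"
proof -
  define g where "g = l 0 - l (d - 1)"
  define s where "s = \<epsilon> / (2 * g)"
  define c where "c = sqrt (1 - s\<^sup>2)"
  have l_ends: "0 \<le> l 0" "0 \<le> l (d - 1)" using l d by auto
  have mid: "(\<Sum>i\<in>{1..<d - 1}. l i) = 1 - l 0 - l (d - 1)"
    using sum_lessThan_split_ends[OF d, of l] sum_l by simp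
  have mid_nonneg: "0 \<le> (\<Sum>i\<in>{1..<d - 1}. l i)" using l by (intro sum_nonneg) auto
  have "0 < s" using \<epsilon> gap by (simp add: s_def g_def)
  moreover have "s \<le> \<epsilon> / (2 * (1/4))" unfolding s_def g_def using \<epsilon> gap by (intro divide_left_mono) auto
  ultimately have s: "0 < s" "s \<le> 2 * \<epsilon>" by simp_all
  then have "s\<^sup>2 \<le> (2 * \<epsilon>)\<^sup>2" by (intro power_mono) auto
  moreover have "s\<^sup>2 < 1" using s \<epsilon> by (simp add: abs_square_less_1)
  ultimately have s_sq: "s\<^sup>2 \<le> 4 * \<epsilon>\<^sup>2" "s\<^sup>2 < 1" by (simp_all add: power_mult_distrib)
  then have cs: "c\<^sup>2 + s\<^sup>2 = 1" and c: "0 \<le> c" "c \<le> 1" by (auto simp: c_def)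
  have "(c\<^sup>2 * l 0 + s\<^sup>2 * l (d - 1) - l 0)\<^sup>2 + (c * s * (l 0 - l (d - 1)))\<^sup>2 = (s * g)\<^sup>2"
    unfolding g_def by (rule plane_rotation_deviation[OF cs])
  also have "s * g = \<epsilon> / 2" using gap unfolding s_def g_def[symmetric] by simp
  finally have far: "2 * sqrt ((c\<^sup>2 * (sqrt (l 0))\<^sup>2 + s\<^sup>2 * (sqrt (l (d - 1)))\<^sup>2 - l 0)\<^sup>2 +
      (c * s * ((sqrt (l 0))\<^sup>2 - (sqrt (l (d - 1)))\<^sup>2))\<^sup>2) = \<epsilon>"
    using l_ends \<epsilon> by simp
  define t where "t = c * (sqrt (l 0) * sqrt (l 0) + sqrt (l (d - 1)) * sqrt (l (d - 1))) +
    (\<Sum>i\<in>{1..<d - 1}. l i)"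
  have t_nonneg: "0 \<le> t" using c l_ends mid_nonneg by (simp add: t_def)
  have t_close: "1 - t \<le> 4 * \<epsilon>\<^sup>2"
  proof -
    have "1 - t = (1 - c) * (l 0 + l (d - 1))"
      using l_ends mid by (simp add: t_def algebra_simps)
    also have "\<dots> \<le> 1 - c" using c l_ends mid mid_nonneg by (intro mult_left_le) auto
    also have "\<dots> \<le> 1 - c\<^sup>2" using c by (simp add: power2_eq_square mult_left_le_one_le)
    finally show ?thesis using cs s_sq by simp
  qed
  show ?thesis
    by (rule copies_lower_bound_rotation[OF d l sum_l cert \<epsilon>(1) _ cs _ t_def t_nonneg t_close])
      (use l_ends far in simp_all)
qed

lemma two_dim_of_small_gap:
  fixes d :: nat and l :: "nat \<Rightarrow> real"
  assumes d: "d \<ge> 2" and l: "\<forall>i<d. 0 \<le> l i" and sum_l: "(\<Sum>i<d. l i) = 1"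
    and mono: "\<forall>i j. i \<le> j \<and> j < d \<longrightarrow> l j \<le> l i" and top: "l 0 \<ge> 1/2"
    and gap: "l 0 - l (d - 1) < 1/4"
  shows "d = 2"
proof (rule ccontr)
  assume "d \<noteq> 2"
  then have "d \<ge> 3" using d by simp
  have "l (d - 1) \<le> l 1" using mono \<open>d \<ge> 3\<close> by auto
  moreover have "l 1 \<le> (\<Sum>i\<in>{1..<d - 1}. l i)" by (rule member_le_sum) (use \<open>d \<ge> 3\<close> l in auto)
  ultimately show False using sum_lessThan_split_ends[OF d, of l] sum_l gap top by linarith
qed

lemma sqrt_diff_squared_le:
  assumes "0 < a" "0 \<le> b"
  shows "(sqrt a - sqrt b)\<^sup>2 \<le> (a - b)\<^sup>2 / a"
proof -
  have "(sqrt a - sqrt b)\<^sup>2 * (sqrt a)\<^sup>2 \<le> (sqrt a - sqrt b)\<^sup>2 * (sqrt a + sqrt b)\<^sup>2"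
    using assms by (intro mult_left_mono power_mono) auto
  also have "\<dots> = (a - b)\<^sup>2"
    using assms by (simp add: power2_eq_square algebra_simps flip: power_mult_distrib)
  finally show ?thesis using assms by (simp add: pos_le_divide_eq)
qed

lemma copies_lower_bound_two_dim:
  assumes l: "0 \<le> l 1" and sum_l: "l 0 + l 1 = 1" and top: "l 0 \<ge> 1/2" and bottom: "l 1 > 1/4"
    and cert: "certifies 2 (diag_state 2 l) \<epsilon> n M" and \<epsilon>: "0 < \<epsilon>" "\<epsilon> < 1/2"
  shows "1 / (144 * \<epsilon>\<^sup>2) \<le> real n"
proof -
  define \<delta> where "\<delta> = \<epsilon> / 2"
  define a where "a = sqrt (l 0 + \<delta>)"
  define b where "b = sqrt (l 1 - \<delta>)"
  have \<delta>: "0 < \<delta>" "\<delta> < 1/4" using \<epsilon> by (auto simp: \<delta>_def)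
  have a: "a\<^sup>2 = l 0 + \<delta>" "0 \<le> a" and b: "b\<^sup>2 = l 1 - \<delta>" "0 \<le> b"
    using top bottom \<delta> by (auto simp: a_def b_def)
  have "(sqrt (l 0) - a)\<^sup>2 \<le> \<delta>\<^sup>2 / l 0"
    using sqrt_diff_squared_le[of "l 0" "l 0 + \<delta>"] top \<delta> by (simp add: a_def)
  also have "\<dots> \<le> 2 * \<delta>\<^sup>2" using top mult_left_mono[of 1 "2 * l 0" "\<delta>\<^sup>2"] by (simp add: field_simps)
  finally have err_a: "(sqrt (l 0) - a)\<^sup>2 \<le> 2 * \<delta>\<^sup>2" .
  have "(sqrt (l 1) - b)\<^sup>2 \<le> \<delta>\<^sup>2 / l 1"
    using sqrt_diff_squared_le[of "l 1" "l 1 - \<delta>"] bottom \<delta> by (simp add: b_def)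
  also have "\<dots> \<le> 4 * \<delta>\<^sup>2" using bottom mult_left_mono[of 1 "4 * l 1" "\<delta>\<^sup>2"] by (simp add: field_simps)
  finally have err_b: "(sqrt (l 1) - b)\<^sup>2 \<le> 4 * \<delta>\<^sup>2" .
  have "1 - (sqrt (l 0) * a + sqrt (l 1) * b) = ((sqrt (l 0) - a)\<^sup>2 + (sqrt (l 1) - b)\<^sup>2) / 2"
    using a b sum_l top l by (simp add: power2_diff algebra_simps)
  also have "\<dots> \<le> 3 * \<delta>\<^sup>2" using err_a err_b by simp
  also have "\<dots> \<le> 4 * \<epsilon>\<^sup>2" using zero_le_power2[of \<epsilon>] by (simp add: \<delta>_def power_divide)
  finally have close: "1 - (sqrt (l 0) * a + sqrt (l 1) * b) \<le> 4 * \<epsilon>\<^sup>2" .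
  have "(\<Sum>i<2. l i) = 1" using sum_l by (simp add: numeral_2_eq_2)
  moreover have "\<forall>i<2. 0 \<le> l i" using l top by (auto simp: less_2_cases_iff)
  ultimately show ?thesis
    using copies_lower_bound_rotation[of 2 l \<epsilon> n M a b 1 0] cert \<epsilon> a b top close
    by (simp add: \<delta>_def)
qed

theorem lemma5p13:
  "\<exists>c > 0. \<forall>(d::nat) (l::nat \<Rightarrow> real) (\<epsilon>::real) (n::nat) (M::complex mat).
     d \<ge> 2 \<and>
     (\<forall>i<d. 0 \<le> l i) \<and> (\<Sum>i<d. l i) = 1 \<and>
     (\<forall>i j. i \<le> j \<and> j < d \<longrightarrow> l j \<le> l i) \<and> l 0 \<ge> 1/2 \<and>
     0 < \<epsilon> \<and> \<epsilon> < 1 / (2 * sqrt 2) \<and>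
     certifies d (diag_state d l) \<epsilon> n M
     \<longrightarrow> real n \<ge> c / \<epsilon>^2"
proof (intro exI[of _ "1/144"] conjI allI impI)
  fix d l \<epsilon> n M
  assume "2 \<le> d \<and> (\<forall>i<d. 0 \<le> l i) \<and> (\<Sum>i<d. l i) = 1 \<and>
     (\<forall>i j. i \<le> j \<and> j < d \<longrightarrow> l j \<le> l i) \<and> 1/2 \<le> l 0 \<and>
     0 < \<epsilon> \<and> \<epsilon> < 1 / (2 * sqrt 2) \<and> certifies d (diag_state d l) \<epsilon> n M"
  then have d: "2 \<le> d" and l: "\<forall>i<d. 0 \<le> l i" and sum_l: "(\<Sum>i<d. l i) = 1"
    and mono: "\<forall>i j. i \<le> j \<and> j < d \<longrightarrow> l j \<le> l i" and top: "1/2 \<le> l 0"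
    and \<epsilon>: "0 < \<epsilon>" "\<epsilon> < 1 / (2 * sqrt 2)" and cert: "certifies d (diag_state d l) \<epsilon> n M"
    by auto
  have "1 / (2 * sqrt 2) < 1/2" by (simp add: field_simps)
  with \<epsilon> have \<epsilon>_half: "\<epsilon> < 1/2" by linarith
  have "1 / (144 * \<epsilon>\<^sup>2) \<le> real n"
  proof (cases "1/4 \<le> l 0 - l (d - 1)")
    case True
    then show ?thesis using copies_lower_bound_large_gap[OF d l sum_l cert \<epsilon>(1) \<epsilon>_half] by blast
  next
    case False
    then have "d = 2" using two_dim_of_small_gap[OF d l sum_l mono top] by simp
    then show ?thesis
      using copies_lower_bound_two_dim[of l \<epsilon> n M] False l sum_l top cert \<epsilon>(1) \<epsilon>_half
      by (simp add: numeral_2_eq_2)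
  qed
  then show "1/144 / \<epsilon>^2 \<le> real n" by simp
qed simp

end
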